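(* Let $(V,\mu)$ be an infinite, connected, locally finite weighted graph and let $\Omega\subset V$ be a connected subset. Assume that either $\Omega\neq V$ or $(V,\mu)$ is non-parabolic. Let $\sigma\in\ell^+(\Omega)$, $\sigma\not\equiv 0$, and let $1<q<\infty$. Then the following are equivalent: (I) the Dirichlet problem $-\Delta u\ge \sigma u^q$ in $\Omega$, $u=0$ on $\partial\Omega$ (when $\Omega=V$: simply $-\Delta u\ge\sigma u^q$ in $V$) admits a positive solution, i.e. a function $u$ with $u(x)>0$ for all $x\in\Omega$; (II) the integral inequality $u(x)\ge G_\Omega(\sigma u^q)(x)$ for all $x\in\Omega$ admits a positive solution $u$ on $\Omega$; (III) for some, equivalently for all, $o\in\Omega$ with $\sigma(o)>0$, there is a constant $C>0$ such that for all $x\in\Omega$, $$G_\Omega\big(\sigma\, g_\Omega(o,\cdot)^q\big)(x)\le C\, g_\Omega(o,x)<\infty .$$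
   Context: A weighted graph $(V,E,\mu)$: $V$ is a countable vertex set, $\mu:V\times V\to[0,\infty)$ is symmetric, $\mu_{xy}>0$ iff $x\sim y$ (i.e. $\{x,y\}\in E$); locally finite means each vertex has finitely many neighbours; $\mu(x)=\sum_{y\sim x}\mu_{xy}$. The Laplacian is $\Delta u(x)=\frac{1}{\mu(x)}\sum_{y\sim x}\mu_{xy}(u(y)-u(x))$. $\ell(\Omega)$ denotes real functions on $\Omega$, $\ell^+(\Omega)$ nonnegative ones; functions on $\Omega$ are extended by zero outside $\Omega$. $\partial\Omega=\{y\in V\setminus\Omega:\ \exists x\in\Omega,\ x\sim y\}$. The random walk $(X_n)$ has transition probabilities $P(x,y)=\mu_{xy}/\mu(x)$; $\tau_\Omega=\min\{n\ge0: X_n\notin\Omega\}$; $P^\Omega_n(x,y)=\mathbb P_x[X_n=y,\ n<\tau_\Omega]$. The Dirichlet Green function is $g_\Omega(x,y)=\sum_{n\ge0}P_n^\Omega(x,y)/\mu(y)$ for $x,y\in\Omega$ (symmetric), $g=g_V$, and the Green operator is $G_\Omega f(x)=\sum_{y\in\Omega}g_\Omega(x,y)f(y)\mu(y)$. The graph is parabolic if every nonnegative superharmonic function is constant, and non-parabolic otherwise (equivalently $g(x,y)<\infty$). Under the stated assumptions $g_\Omega(x,y)<\infty$ for all $x,y\in\Omega$. *)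

theory Defs
  imports "HOL-Analysis.Analysis"
begin

definition nbrs :: "('a \<Rightarrow> 'a \<Rightarrow> real) \<Rightarrow> 'a \<Rightarrow> 'a set" where
  "nbrs mu x = {y. mu x y > 0}"

definition weighted_graph :: "('a \<Rightarrow> 'a \<Rightarrow> real) \<Rightarrow> bool" where
  "weighted_graph mu \<longleftrightarrow> (\<forall>x y. mu x y = mu y x) \<and> (\<forall>x y. 0 \<le> mu x y)"

definition locally_finite :: "('a \<Rightarrow> 'a \<Rightarrow> real) \<Rightarrow> bool" where
  "locally_finite mu \<longleftrightarrow> (\<forall>x. finite (nbrs mu x))"

definition graph_connected :: "('a \<Rightarrow> 'a \<Rightarrow> real) \<Rightarrow> bool" where
  "graph_connected mu \<longleftrightarrow> (\<forall>x y. (x, y) \<in> {(a, b). mu a b > 0}\<^sup>*)"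

definition connected_subset :: "('a \<Rightarrow> 'a \<Rightarrow> real) \<Rightarrow> 'a set \<Rightarrow> bool" where
  "connected_subset mu \<Omega> \<longleftrightarrow>
     (\<forall>x\<in>\<Omega>. \<forall>y\<in>\<Omega>. (x, y) \<in> {(a, b). a \<in> \<Omega> \<and> b \<in> \<Omega> \<and> mu a b > 0}\<^sup>*)"

definition vmeasure :: "('a \<Rightarrow> 'a \<Rightarrow> real) \<Rightarrow> 'a \<Rightarrow> real" where
  "vmeasure mu x = (\<Sum>y\<in>nbrs mu x. mu x y)"

definition laplacian :: "('a \<Rightarrow> 'a \<Rightarrow> real) \<Rightarrow> ('a \<Rightarrow> real) \<Rightarrow> 'a \<Rightarrow> real" where
  "laplacian mu u x = (1 / vmeasure mu x) * (\<Sum>y\<in>nbrs mu x. mu x y * (u y - u x))"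

definition superharmonic :: "('a \<Rightarrow> 'a \<Rightarrow> real) \<Rightarrow> ('a \<Rightarrow> real) \<Rightarrow> bool" where
  "superharmonic mu u \<longleftrightarrow> (\<forall>x. laplacian mu u x \<le> 0)"

definition parabolic :: "('a \<Rightarrow> 'a \<Rightarrow> real) \<Rightarrow> bool" where
  "parabolic mu \<longleftrightarrow>
     (\<forall>u. (\<forall>x. 0 \<le> u x) \<and> superharmonic mu u \<longrightarrow> (\<exists>c. \<forall>x. u x = c))"

definition trans_prob :: "('a \<Rightarrow> 'a \<Rightarrow> real) \<Rightarrow> 'a \<Rightarrow> 'a \<Rightarrow> real" where
  "trans_prob mu x y = mu x y / vmeasure mu x"

text \<open>Killed transition probabilities
  P^\<Omega>_n(x,y) = P_x[X_n = y, n < tau_\<Omega>], i.e. the total probability of walks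
  x = x_0, ..., x_n = y all of whose points lie in \<Omega>.\<close>
fun killed_prob :: "('a \<Rightarrow> 'a \<Rightarrow> real) \<Rightarrow> 'a set \<Rightarrow> nat \<Rightarrow> 'a \<Rightarrow> 'a \<Rightarrow> real" where
  "killed_prob mu \<Omega> 0 x y = (if x \<in> \<Omega> \<and> x = y then 1 else 0)"
| "killed_prob mu \<Omega> (Suc n) x y =
     (if x \<in> \<Omega> then (\<Sum>z\<in>nbrs mu x. trans_prob mu x z * killed_prob mu \<Omega> n z y) else 0)"

definition green :: "('a \<Rightarrow> 'a \<Rightarrow> real) \<Rightarrow> 'a set \<Rightarrow> 'a \<Rightarrow> 'a \<Rightarrow> ennreal" where
  "green mu \<Omega> x y = (\<Sum>n. ennreal (killed_prob mu \<Omega> n x y)) / ennreal (vmeasure mu y)"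

definition green_op :: "('a \<Rightarrow> 'a \<Rightarrow> real) \<Rightarrow> 'a set \<Rightarrow> ('a \<Rightarrow> ennreal) \<Rightarrow> 'a \<Rightarrow> ennreal" where
  "green_op mu \<Omega> f x = (\<Sum>\<^sub>\<infinity>y\<in>\<Omega>. green mu \<Omega> x y * f y * ennreal (vmeasure mu y))"

definition epowr :: "ennreal \<Rightarrow> real \<Rightarrow> ennreal" where
  "epowr t q = (if t = \<infinity> then \<infinity> else ennreal (enn2real t powr q))"

end

theory Submission
  imports Defs
begin

text \<open>
  Write \<open>G\<close> for \<open>G\<^sub>\<Omega>\<close> and \<open>Q\<close> for the transition operator of the random walk killed outside
  \<open>\<Omega>\<close>. Then \<open>G = \<Sum>\<^sub>n Q\<^sup>n\<close>, so \<open>G f\<close> is the least nonnegative \<open>F\<close> with \<open>F \<ge> f + Q F\<close> on \<open>\<Omega>\<close>,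
  and \<open>F = G f\<close> solves \<open>F = f + Q F\<close> wherever it is finite. Hence a positive solution \<open>u\<close> of (I)
  dominates \<open>G(\<sigma> u\<^sup>q)\<close>, which is (II); conversely, if \<open>u \<ge> G(\<sigma> u\<^sup>q)\<close> then \<open>G(\<sigma> u\<^sup>q)\<close> itself solves
  (I), and it is positive because \<open>g\<^sub>\<Omega> > 0\<close> on the connected set \<open>\<Omega>\<close>. If (III) holds at \<open>o\<close>, a
  suitable multiple of \<open>g\<^sub>\<Omega>(o,\<cdot>)\<close> solves (II).

  For (I) \<open>\<Longrightarrow>\<close> (III) at any \<open>o\<close> with \<open>\<sigma>(o) > 0\<close>, comparing \<open>u\<close> with \<open>G(\<sigma> u\<^sup>q)\<close> gives \<open>u \<ge> a h\<close>
  for \<open>h = g\<^sub>\<Omega>(o,\<cdot>)\<close> and \<open>a = \<sigma>(o) u(o)\<^sup>q \<mu>(o)\<close>; in particular \<open>h\<close> is finite. For the concave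
  profile \<open>\<phi>\<close> with \<open>\<phi>'(t) = t\<^sup>-\<^sup>q\<close> and \<open>\<phi>(a) = a\<^sup>1\<^sup>-\<^sup>q\<close>, the function \<open>H = h \<phi>(u/h)\<close> satisfies
  \<open>H \<ge> \<sigma> h\<^sup>q + Q H\<close>, because the perspective \<open>(h, u) \<mapsto> h \<phi>(u/h)\<close> lies below its tangent planes.
  Minimality of \<open>G\<close> then gives \<open>G(\<sigma> h\<^sup>q) \<le> H \<le> (sup \<phi>) h\<close>.

  That the graph
  is infinite and connected is only used to get \<open>\<mu>(x) > 0\<close>.
\<close>

section \<open>Negative powers\<close>

lemma convex_on_powr_nonpos:
  assumes "p \<le> 0"
  shows "convex_on {0<..} (\<lambda>x::real. x powr p)"
  using assms by (intro f''_ge0_imp_convex derivative_eq_intros | simp add: zero_le_mult_iff mult_le_0_iff)+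

lemma powr_nonpos_above_tangent:
  fixes s t p :: real
  assumes "p \<le> 0" "0 < s" "0 < t"
  shows "p * t powr (p - 1) * (s - t) \<le> s powr p - t powr p"
  using assms
  by (intro convex_on_imp_above_tangent[where A = "{0<..}", OF convex_on_powr_nonpos])
     (auto intro!: derivative_eq_intros simp: interior_open is_interval_connected)

text \<open>\<open>\<phi>(t) = a\<^sup>1\<^sup>-\<^sup>q + \<integral>\<^sub>a\<^sup>t s\<^sup>-\<^sup>q ds\<close>\<close>
definition powr_profile :: "real \<Rightarrow> real \<Rightarrow> real \<Rightarrow> real" where
  "powr_profile q a t = a powr (1 - q) * q / (q - 1) - t powr (1 - q) / (q - 1)"

lemma powr_profile_le:
  assumes "1 < q"
  shows "powr_profile q a t \<le> a powr (1 - q) * q / (q - 1)"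
  using assms by (simp add: powr_profile_def)

lemma powr_profile_ge:
  assumes q: "1 < q" and "0 < a" "a \<le> t"
  shows "t powr (1 - q) \<le> powr_profile q a t"
proof -
  have "t powr (1 - q) \<le> a powr (1 - q)"
    using assms by (intro powr_mono2') auto
  then have "t powr (1 - q) * (q - 1) \<le> a powr (1 - q) * q - t powr (1 - q)"
    using q by (simp add: algebra_simps)
  then show ?thesis
    using q by (simp add: powr_profile_def pos_le_divide_eq diff_divide_distrib[symmetric])
qed

lemma powr_profile_nonneg:
  assumes "1 < q" "0 < a" "a \<le> t"
  shows "0 \<le> powr_profile q a t"
  using powr_profile_ge[OF assms] powr_ge_zero[of t "1 - q"] by linarith

lemma powr_profile_perspective_le_tangent:
  assumes q: "1 < q" and h: "0 < h" and s: "0 < s" and t: "0 < t"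
  shows "h * powr_profile q a (s / h) \<le> h * powr_profile q a t + t powr (- q) * (s - t * h)"
proof -
  have "(1 - q) * (t powr (- q) * (s / h - t)) \<le> (s / h) powr (1 - q) - t powr (1 - q)"
    using powr_nonpos_above_tangent[of "1 - q" "s / h" t] q h s t by (simp add: mult.assoc)
  moreover have "- X \<le> Y / (q - 1)" if "(1 - q) * X \<le> Y" for X Y :: real
    using that q by (simp add: pos_le_divide_eq algebra_simps)
  ultimately have "- (t powr (- q) * (s / h - t)) \<le> ((s / h) powr (1 - q) - t powr (1 - q)) / (q - 1)"
    by blast
  then have "powr_profile q a (s / h) - powr_profile q a t \<le> t powr (- q) * (s / h - t)"
    by (simp add: powr_profile_def diff_divide_distrib)
  then have "h * (powr_profile q a (s / h) - powr_profile q a t) \<le> h * (t powr (- q) * (s / h - t))"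
    using h by (intro mult_left_mono) auto
  also have "\<dots> = t powr (- q) * (s - t * h)"
    using h by (simp add: field_simps)
  finally show ?thesis
    by (simp add: algebra_simps)
qed

lemma powr_fixpoint:
  fixes C q :: real
  assumes "0 < C" "1 < q"
  shows "(C powr (- 1 / (q - 1))) powr q * C = C powr (- 1 / (q - 1))"
proof -
  define l where "l = C powr (- 1 / (q - 1))"
  have "l powr (q - 1) * C = 1"
    using assms unfolding l_def powr_powr by (simp add: powr_minus)
  moreover have "l powr q = l * l powr (q - 1)"
    using assms by (simp add: l_def powr_mult_base)
  ultimately show ?thesis
    by (simp add: l_def mult.assoc)
qed

section \<open>Nonnegative infinite sums\<close>

text \<open>The library lemma \<open>summable_on_ennreal\<close> only covers summands of the form \<open>ennreal_of_enat\<close>.\<close>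
lemma ennreal_summable_on [simp]: "(f :: 'a \<Rightarrow> ennreal) summable_on A"
  by (simp add: nonneg_summable_on_complete)

lemma infsum_indicator_ennreal:
  "(\<Sum>\<^sub>\<infinity>y\<in>A. if y = a then c else 0) = (if a \<in> A then c else (0::ennreal))"
proof -
  have "(\<Sum>\<^sub>\<infinity>y\<in>A. if y = a then c else 0) = (\<Sum>\<^sub>\<infinity>y\<in>A \<inter> {a}. if y = a then c else 0)"
    by (rule infsum_cong_neutral) auto
  then show ?thesis
    by (cases "a \<in> A") auto
qed

lemma infsum_sum_ennreal:
  fixes f :: "'i \<Rightarrow> 'b \<Rightarrow> ennreal"
  assumes "finite I"
  shows "(\<Sum>\<^sub>\<infinity>y\<in>A. \<Sum>i\<in>I. f i y) = (\<Sum>i\<in>I. \<Sum>\<^sub>\<infinity>y\<in>A. f i y)"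
  using assms by (induction I rule: finite_induct) (simp_all add: infsum_add)

lemma infsum_cmult_ennreal:
  fixes f :: "'b \<Rightarrow> ennreal"
  shows "(\<Sum>\<^sub>\<infinity>y\<in>A. c * f y) = c * (\<Sum>\<^sub>\<infinity>y\<in>A. f y)"
  by (simp add: nonneg_infsum_complete SUP_mult_left_ennreal sum_distrib_left)

lemma infsum_suminf_ennreal:
  fixes a :: "nat \<Rightarrow> 'b \<Rightarrow> ennreal"
  shows "(\<Sum>\<^sub>\<infinity>y\<in>A. \<Sum>n. a n y) = (\<Sum>n. \<Sum>\<^sub>\<infinity>y\<in>A. a n y)"
proof (rule antisym)
  have "(\<Sum>y\<in>F. \<Sum>n. a n y) \<le> (\<Sum>n. \<Sum>\<^sub>\<infinity>y\<in>A. a n y)" if "finite F" "F \<subseteq> A" for F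
  proof -
    have "(\<Sum>y\<in>F. \<Sum>n. a n y) = (\<Sum>n. \<Sum>y\<in>F. a n y)"
      by (rule suminf_sum[symmetric]) simp
    also have "\<dots> \<le> (\<Sum>n. \<Sum>\<^sub>\<infinity>y\<in>A. a n y)"
    proof (intro suminf_le)
      fix n
      have "(\<Sum>y\<in>F. a n y) = (\<Sum>\<^sub>\<infinity>y\<in>F. a n y)"
        using that by simp
      also have "\<dots> \<le> (\<Sum>\<^sub>\<infinity>y\<in>A. a n y)"
        using that by (intro infsum_mono_neutral) auto
      finally show "(\<Sum>y\<in>F. a n y) \<le> (\<Sum>\<^sub>\<infinity>y\<in>A. a n y)" .
    qed auto
    finally show ?thesis .
  qed
  then show "(\<Sum>\<^sub>\<infinity>y\<in>A. \<Sum>n. a n y) \<le> (\<Sum>n. \<Sum>\<^sub>\<infinity>y\<in>A. a n y)"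
    by (subst nonneg_infsum_complete) (auto intro!: SUP_least)
next
  have "(\<Sum>n<N. \<Sum>\<^sub>\<infinity>y\<in>A. a n y) \<le> (\<Sum>\<^sub>\<infinity>y\<in>A. \<Sum>n. a n y)" for N
    by (simp flip: infsum_sum_ennreal) (auto intro!: infsum_mono sum_le_suminf)
  then show "(\<Sum>n. \<Sum>\<^sub>\<infinity>y\<in>A. a n y) \<le> (\<Sum>\<^sub>\<infinity>y\<in>A. \<Sum>n. a n y)"
    by (intro suminf_le_const) simp
qed

section \<open>The killed random walk and its Green function\<close>

definition markov_op :: "('a \<Rightarrow> 'a \<Rightarrow> real) \<Rightarrow> ('a \<Rightarrow> real) \<Rightarrow> 'a \<Rightarrow> real" where
  "markov_op mu u x = (\<Sum>z\<in>nbrs mu x. trans_prob mu x z * u z)"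

definition unit_charge :: "('a \<Rightarrow> 'a \<Rightarrow> real) \<Rightarrow> 'a \<Rightarrow> 'a \<Rightarrow> real" where
  "unit_charge mu p y = (if y = p then 1 / vmeasure mu p else 0)"

locale killed_walk =
  fixes mu :: "'a \<Rightarrow> 'a \<Rightarrow> real" and \<Omega> :: "'a set"
  assumes weighted_graph: "weighted_graph mu" and locally_finite: "locally_finite mu"
    and vmeasure_pos: "\<And>x. 0 < vmeasure mu x"
begin

lemma vmeasure_nonzero [simp]: "vmeasure mu x \<noteq> 0"
  using vmeasure_pos[of x] by simp

lemma mu_sym: "mu x y = mu y x"
  using weighted_graph by (simp add: weighted_graph_def)

lemma mu_nonneg: "0 \<le> mu x y"
  using weighted_graph by (simp add: weighted_graph_def)

lemma nbrs_sym: "y \<in> nbrs mu x \<longleftrightarrow> x \<in> nbrs mu y"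
  by (simp add: nbrs_def mu_sym)

lemma finite_nbrs [simp]: "finite (nbrs mu x)"
  using locally_finite by (simp add: locally_finite_def)

lemma trans_prob_nonneg: "0 \<le> trans_prob mu x y"
  using mu_nonneg[of x y] vmeasure_pos[of x] by (simp add: trans_prob_def)

lemma sum_trans_prob: "(\<Sum>z\<in>nbrs mu x. trans_prob mu x z) = 1"
  using vmeasure_pos[of x] by (simp add: trans_prob_def vmeasure_def flip: sum_divide_distrib)

lemma laplacian_eq_markov_op: "laplacian mu u x = markov_op mu u x - u x"
proof -
  have "laplacian mu u x = markov_op mu u x - (\<Sum>z\<in>nbrs mu x. trans_prob mu x z) * u x"
    unfolding laplacian_def markov_op_def trans_prob_def
    by (simp add: sum_distrib_left sum_distrib_right right_diff_distrib sum_subtractf sum_divide_distrib)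
  then show ?thesis
    by (simp add: sum_trans_prob)
qed

lemma killed_prob_nonneg: "0 \<le> killed_prob mu \<Omega> n x y"
  by (induction n arbitrary: x) (auto intro!: sum_nonneg mult_nonneg_nonneg trans_prob_nonneg)

lemma killed_prob_outside_left: "x \<notin> \<Omega> \<Longrightarrow> killed_prob mu \<Omega> n x y = 0"
  by (cases n) auto

lemma killed_prob_outside_right: "y \<notin> \<Omega> \<Longrightarrow> killed_prob mu \<Omega> n x y = 0"
  by (induction n arbitrary: x) auto

lemma killed_prob_Suc_right:
  "killed_prob mu \<Omega> (Suc n) x y =
     (if y \<in> \<Omega> then (\<Sum>z\<in>nbrs mu y. killed_prob mu \<Omega> n x z * trans_prob mu z y) else 0)"
proof (induction n arbitrary: x)
  case 0
  have "(\<Sum>z\<in>nbrs mu x. trans_prob mu x z * killed_prob mu \<Omega> 0 z y)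
      = (\<Sum>z\<in>nbrs mu x. if z = y then of_bool (y \<in> \<Omega>) * trans_prob mu x y else 0)"
    by (rule sum.cong) auto
  moreover have "(\<Sum>z\<in>nbrs mu y. killed_prob mu \<Omega> 0 x z * trans_prob mu z y)
      = (\<Sum>z\<in>nbrs mu y. if z = x then of_bool (x \<in> \<Omega>) * trans_prob mu x y else 0)"
    by (rule sum.cong) auto
  ultimately show ?case
    by (simp add: nbrs_sym)
next
  case (Suc n)
  show ?case
  proof (cases "x \<in> \<Omega> \<and> y \<in> \<Omega>")
    case True
    have "killed_prob mu \<Omega> (Suc (Suc n)) x y =
      (\<Sum>z\<in>nbrs mu x. trans_prob mu x z * (\<Sum>w\<in>nbrs mu y. killed_prob mu \<Omega> n z w * trans_prob mu w y))"
      using True by (simp only: killed_prob.simps(2)[of mu \<Omega> "Suc n" x y] Suc.IH if_True)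
    also have "\<dots> = (\<Sum>w\<in>nbrs mu y. (\<Sum>z\<in>nbrs mu x. trans_prob mu x z * killed_prob mu \<Omega> n z w) * trans_prob mu w y)"
      by (simp add: sum_distrib_left sum_distrib_right mult.assoc sum.swap[of _ "nbrs mu x"])
    finally show ?thesis
      using True by simp
  next
    case False
    then show ?thesis
      by (auto simp: killed_prob_outside_left killed_prob_outside_right simp del: killed_prob.simps)
  qed
qed

lemma killed_prob_reversible:
  "vmeasure mu x * killed_prob mu \<Omega> n x y = vmeasure mu y * killed_prob mu \<Omega> n y x"
proof (induction n arbitrary: x y)
  case (Suc n)
  show ?case
  proof (cases "x \<in> \<Omega>")
    case True
    have "vmeasure mu x * killed_prob mu \<Omega> (Suc n) x y
        = (\<Sum>z\<in>nbrs mu x. mu z x / vmeasure mu z * (vmeasure mu z * killed_prob mu \<Omega> n z y))"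
      using True by (simp add: sum_distrib_left trans_prob_def mu_sym)
    also have "\<dots> = (\<Sum>z\<in>nbrs mu x. mu z x / vmeasure mu z * (vmeasure mu y * killed_prob mu \<Omega> n y z))"
      by (simp only: Suc.IH)
    also have "\<dots> = vmeasure mu y * (\<Sum>z\<in>nbrs mu x. killed_prob mu \<Omega> n y z * trans_prob mu z x)"
      by (simp add: trans_prob_def sum_distrib_left algebra_simps)
    also have "\<dots> = vmeasure mu y * killed_prob mu \<Omega> (Suc n) y x"
      using True by (simp only: killed_prob_Suc_right) simp
    finally show ?thesis .
  qed (simp add: killed_prob_outside_left killed_prob_Suc_right del: killed_prob.simps)
qed auto

lemma green_eq_suminf: "green mu \<Omega> x y = (\<Sum>n. ennreal (killed_prob mu \<Omega> n x y / vmeasure mu y))"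
  unfolding green_def
  by (simp add: ennreal_suminf_divide[symmetric] divide_ennreal killed_prob_nonneg vmeasure_pos)

lemma green_sym: "green mu \<Omega> x y = green mu \<Omega> y x"
proof -
  have "killed_prob mu \<Omega> n x y / vmeasure mu y = killed_prob mu \<Omega> n y x / vmeasure mu x" for n
    using killed_prob_reversible[of x n y] vmeasure_pos[of x] vmeasure_pos[of y]
    by (simp add: field_simps)
  then show ?thesis
    by (simp add: green_eq_suminf)
qed

lemma green_outside: "x \<notin> \<Omega> \<or> y \<notin> \<Omega> \<Longrightarrow> green mu \<Omega> x y = 0"
  by (auto simp: green_eq_suminf killed_prob_outside_left killed_prob_outside_right
      simp del: killed_prob.simps)

lemma killed_prob_pos_if_path:
  assumes "(x, y) \<in> {(a, b). a \<in> \<Omega> \<and> b \<in> \<Omega> \<and> mu a b > 0}\<^sup>*" and "y \<in> \<Omega>"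
  shows "\<exists>n. 0 < killed_prob mu \<Omega> n x y"
  using assms(1)
proof (induction rule: converse_rtrancl_induct)
  case base
  then show ?case
    using assms(2) by (intro exI[of _ 0]) simp
next
  case (step x z)
  then obtain n where n: "0 < killed_prob mu \<Omega> n z y"
    by blast
  from step.hyps have xz: "x \<in> \<Omega>" "z \<in> nbrs mu x" "0 < mu x z"
    by (auto simp: nbrs_def)
  have "0 < trans_prob mu x z * killed_prob mu \<Omega> n z y"
    using xz n vmeasure_pos[of x] by (simp add: trans_prob_def)
  also have "\<dots> \<le> (\<Sum>w\<in>nbrs mu x. trans_prob mu x w * killed_prob mu \<Omega> n w y)"
    by (rule member_le_sum) (auto intro!: mult_nonneg_nonneg trans_prob_nonneg killed_prob_nonneg xz)
  also have "\<dots> = killed_prob mu \<Omega> (Suc n) x y"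
    using xz by simp
  finally show ?case
    by blast
qed

lemma green_pos:
  assumes "connected_subset mu \<Omega>" "x \<in> \<Omega>" "y \<in> \<Omega>"
  shows "0 < green mu \<Omega> x y"
proof -
  obtain n where n: "0 < killed_prob mu \<Omega> n x y"
    using killed_prob_pos_if_path[of x y] assms by (auto simp: connected_subset_def)
  have "0 < ennreal (killed_prob mu \<Omega> n x y / vmeasure mu y)"
    using n vmeasure_pos[of y] by simp
  also have "\<dots> \<le> (\<Sum>n. ennreal (killed_prob mu \<Omega> n x y / vmeasure mu y))"
    using sum_le_suminf[OF summableI, of "{n}"] by simp
  finally show ?thesis
    by (simp add: green_eq_suminf)
qed

lemma green_op_outside: "x \<notin> \<Omega> \<Longrightarrow> green_op mu \<Omega> f x = 0"
  by (simp add: green_op_def green_outside)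

lemma green_op_cong: "(\<And>y. y \<in> \<Omega> \<Longrightarrow> f y = f' y) \<Longrightarrow> green_op mu \<Omega> f x = green_op mu \<Omega> f' x"
  unfolding green_op_def by (rule infsum_cong) simp

lemma green_op_mono: "(\<And>y. y \<in> \<Omega> \<Longrightarrow> f y \<le> f' y) \<Longrightarrow> green_op mu \<Omega> f x \<le> green_op mu \<Omega> f' x"
  unfolding green_op_def by (intro infsum_mono) (auto intro!: mult_left_mono mult_right_mono)

lemma green_op_cmult: "green_op mu \<Omega> (\<lambda>y. c * f y) x = c * green_op mu \<Omega> f x"
  by (simp add: green_op_def infsum_cmult_ennreal mult_ac)

lemma green_op_unit_charge:
  assumes "p \<in> \<Omega>"
  shows "green_op mu \<Omega> (\<lambda>y. ennreal (unit_charge mu p y)) x = green mu \<Omega> p x"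
proof -
  have "ennreal (1 / vmeasure mu p) * ennreal (vmeasure mu p) = 1"
    using vmeasure_pos[of p] by (simp flip: ennreal_mult)
  then have "green_op mu \<Omega> (\<lambda>y. ennreal (unit_charge mu p y)) x
      = (\<Sum>\<^sub>\<infinity>y\<in>\<Omega>. if y = p then green mu \<Omega> x p else 0)"
    unfolding green_op_def unit_charge_def by (intro infsum_cong) (auto simp: mult.assoc)
  then show ?thesis
    using assms by (simp add: infsum_indicator_ennreal green_sym)
qed

lemma green_op_ge_green:
  assumes "p \<in> \<Omega>"
  shows "f p * ennreal (vmeasure mu p) * green mu \<Omega> p x \<le> green_op mu \<Omega> f x"
proof -
  have "f p * ennreal (vmeasure mu p) * green mu \<Omega> p x
      = green_op mu \<Omega> (\<lambda>y. f p * ennreal (vmeasure mu p) * ennreal (unit_charge mu p y)) x"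
    using assms by (simp add: green_op_cmult green_op_unit_charge)
  also have "\<dots> \<le> green_op mu \<Omega> f x"
  proof (rule green_op_mono)
    fix y
    have "ennreal (vmeasure mu p) * ennreal (1 / vmeasure mu p) = 1"
      using vmeasure_pos[of p] by (simp flip: ennreal_mult)
    then show "f p * ennreal (vmeasure mu p) * ennreal (unit_charge mu p y) \<le> f y"
      by (auto simp: unit_charge_def mult.assoc)
  qed
  finally show ?thesis .
qed

lemma green_op_pos:
  assumes "connected_subset mu \<Omega>" "p \<in> \<Omega>" "0 < f p" "x \<in> \<Omega>"
  shows "0 < green_op mu \<Omega> f x"
proof -
  have "0 < f p * ennreal (vmeasure mu p) * green mu \<Omega> p x"
    using assms green_pos[of p x] vmeasure_pos[of p] by (simp add: ennreal_zero_less_mult_iff)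
  then show ?thesis
    using green_op_ge_green[OF \<open>p \<in> \<Omega>\<close>] by (rule less_le_trans)
qed

end

section \<open>The Green operator as a Neumann series\<close>

definition killed_step :: "('a \<Rightarrow> 'a \<Rightarrow> real) \<Rightarrow> 'a set \<Rightarrow> ('a \<Rightarrow> ennreal) \<Rightarrow> 'a \<Rightarrow> ennreal" where
  "killed_step mu \<Omega> F x = (if x \<in> \<Omega> then (\<Sum>z\<in>nbrs mu x. ennreal (trans_prob mu x z) * F z) else 0)"

definition zero_outside :: "'a set \<Rightarrow> ('a \<Rightarrow> ennreal) \<Rightarrow> 'a \<Rightarrow> ennreal" where
  "zero_outside \<Omega> f y = (if y \<in> \<Omega> then f y else 0)"

definition neumann_green :: "('a \<Rightarrow> 'a \<Rightarrow> real) \<Rightarrow> 'a set \<Rightarrow> ('a \<Rightarrow> ennreal) \<Rightarrow> 'a \<Rightarrow> ennreal" where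
  "neumann_green mu \<Omega> f x = (\<Sum>n. (killed_step mu \<Omega> ^^ n) (zero_outside \<Omega> f) x)"

context killed_walk
begin

abbreviation Q where "Q \<equiv> killed_step mu \<Omega>"

lemma infsum_killed_prob:
  "(\<Sum>\<^sub>\<infinity>y\<in>\<Omega>. ennreal (killed_prob mu \<Omega> n x y) * f y) = (Q ^^ n) (zero_outside \<Omega> f) x"
proof (induction n arbitrary: x)
  case 0
  have "(\<Sum>\<^sub>\<infinity>y\<in>\<Omega>. ennreal (killed_prob mu \<Omega> 0 x y) * f y)
      = (\<Sum>\<^sub>\<infinity>y\<in>\<Omega>. if y = x then zero_outside \<Omega> f x else 0)"
    by (rule infsum_cong) (auto simp: zero_outside_def)
  then show ?case
    by (simp add: infsum_indicator_ennreal zero_outside_def)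
next
  case (Suc n)
  show ?case
  proof (cases "x \<in> \<Omega>")
    case True
    have "(\<Sum>\<^sub>\<infinity>y\<in>\<Omega>. ennreal (killed_prob mu \<Omega> (Suc n) x y) * f y)
       = (\<Sum>\<^sub>\<infinity>y\<in>\<Omega>. \<Sum>z\<in>nbrs mu x. ennreal (trans_prob mu x z) * (ennreal (killed_prob mu \<Omega> n z y) * f y))"
      using True
      by (intro infsum_cong) (simp add: ennreal_mult trans_prob_nonneg killed_prob_nonneg sum_distrib_right
          mult.assoc killed_prob.simps(2)[of mu \<Omega> n x] flip: sum_ennreal del: killed_prob.simps)
    also have "\<dots> = (Q ^^ Suc n) (zero_outside \<Omega> f) x"
      using True by (simp add: infsum_sum_ennreal infsum_cmult_ennreal Suc.IH
          killed_step_def[of mu \<Omega> "(Q ^^ n) (zero_outside \<Omega> f)" x])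
    finally show ?thesis .
  qed (simp add: killed_prob_outside_left killed_step_def del: killed_prob.simps)
qed

lemma green_op_eq_neumann_green: "green_op mu \<Omega> f x = neumann_green mu \<Omega> f x"
proof -
  have "green mu \<Omega> x y * ennreal (vmeasure mu y) = (\<Sum>n. ennreal (killed_prob mu \<Omega> n x y))" for y
    by (simp add: green_eq_suminf killed_prob_nonneg vmeasure_pos less_imp_le
        flip: ennreal_suminf_multc ennreal_mult)
  then have "green mu \<Omega> x y * f y * ennreal (vmeasure mu y) = (\<Sum>n. ennreal (killed_prob mu \<Omega> n x y) * f y)" for y
    by (simp add: mult.commute mult.left_commute)
  then have "green_op mu \<Omega> f x = (\<Sum>\<^sub>\<infinity>y\<in>\<Omega>. \<Sum>n. ennreal (killed_prob mu \<Omega> n x y) * f y)"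
    by (simp add: green_op_def)
  also have "\<dots> = (\<Sum>n. \<Sum>\<^sub>\<infinity>y\<in>\<Omega>. ennreal (killed_prob mu \<Omega> n x y) * f y)"
    by (rule infsum_suminf_ennreal)
  finally show ?thesis
    by (simp add: infsum_killed_prob neumann_green_def)
qed

lemma killed_step_mono: "(\<And>z. F z \<le> F' z) \<Longrightarrow> Q F x \<le> Q F' x"
  by (auto simp: killed_step_def intro!: sum_mono mult_left_mono)

lemma killed_step_sum: "finite I \<Longrightarrow> Q (\<lambda>z. \<Sum>i\<in>I. F i z) x = (\<Sum>i\<in>I. Q (F i) x)"
  by (simp add: killed_step_def sum_distrib_left sum.swap[of _ I])

lemma killed_step_suminf: "Q (\<lambda>z. \<Sum>n. F n z) x = (\<Sum>n. Q (F n) x)"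
  by (simp add: killed_step_def suminf_sum flip: ennreal_suminf_cmult)

lemma killed_step_ennreal:
  assumes "\<And>z. 0 \<le> u z" "x \<in> \<Omega>"
  shows "Q (\<lambda>z. ennreal (u z)) x = ennreal (markov_op mu u x)"
  using assms
  by (simp add: killed_step_def markov_op_def ennreal_mult trans_prob_nonneg flip: sum_ennreal)

lemma killed_step_power_outside: "x \<notin> \<Omega> \<Longrightarrow> (Q ^^ n) (zero_outside \<Omega> f) x = 0"
  by (cases n) (auto simp: zero_outside_def killed_step_def)

lemma green_op_eq:
  assumes "x \<in> \<Omega>"
  shows "green_op mu \<Omega> f x = f x + Q (green_op mu \<Omega> f) x"
proof -
  let ?a = "\<lambda>n. (Q ^^ n) (zero_outside \<Omega> f)"
  have "neumann_green mu \<Omega> f x = (\<Sum>n. ?a (Suc n) x) + ?a 0 x"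
    unfolding neumann_green_def using suminf_offset[of "\<lambda>n. ?a n x" 1] by simp
  also have "(\<Sum>n. ?a (Suc n) x) = Q (neumann_green mu \<Omega> f) x"
    by (simp add: neumann_green_def[abs_def] killed_step_suminf)
  finally show ?thesis
    using assms by (simp add: green_op_eq_neumann_green[abs_def] zero_outside_def add.commute)
qed

lemma green_op_least:
  assumes super: "\<And>x. x \<in> \<Omega> \<Longrightarrow> f x + Q F x \<le> F x" and "x \<in> \<Omega>"
  shows "green_op mu \<Omega> f x \<le> F x"
proof -
  let ?a = "\<lambda>n. (Q ^^ n) (zero_outside \<Omega> f)"
  have partial: "(\<Sum>n<N. ?a n x) \<le> F x" if "x \<in> \<Omega>" for N x
    using that
  proof (induction N arbitrary: x)
    case (Suc N)
    have "(\<Sum>n<Suc N. ?a n x) = f x + Q (\<lambda>z. \<Sum>n<N. ?a n z) x"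
      using Suc.prems by (simp add: sum.lessThan_Suc_shift zero_outside_def killed_step_sum
          del: sum.lessThan_Suc)
    also have "\<dots> \<le> f x + Q F x"
    proof (intro add_left_mono killed_step_mono)
      fix z
      show "(\<Sum>n<N. ?a n z) \<le> F z"
        using Suc.IH[of z] by (cases "z \<in> \<Omega>") (simp_all add: killed_step_power_outside)
    qed
    also have "\<dots> \<le> F x"
      using super Suc.prems .
    finally show ?case .
  qed simp
  show ?thesis
    unfolding green_op_eq_neumann_green neumann_green_def
    using partial[OF \<open>x \<in> \<Omega>\<close>] by (intro suminf_le_const) simp_all
qed

end

section \<open>Supersolutions and the three conditions\<close>

context killed_walk
begin

lemma markov_op_nonneg: "(\<And>z. 0 \<le> u z) \<Longrightarrow> 0 \<le> markov_op mu u x"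
  by (simp add: markov_op_def sum_nonneg mult_nonneg_nonneg trans_prob_nonneg)

lemma green_op_le_supersolution:
  assumes F_nonneg: "\<And>x. 0 \<le> F x" and f_nonneg: "\<And>x. x \<in> \<Omega> \<Longrightarrow> 0 \<le> f x"
    and super: "\<And>x. x \<in> \<Omega> \<Longrightarrow> f x + markov_op mu F x \<le> F x" and "x \<in> \<Omega>"
  shows "green_op mu \<Omega> (\<lambda>y. ennreal (f y)) x \<le> ennreal (F x)"
proof (rule green_op_least[OF _ \<open>x \<in> \<Omega>\<close>])
  fix x
  assume "x \<in> \<Omega>"
  then show "ennreal (f x) + Q (\<lambda>z. ennreal (F z)) x \<le> ennreal (F x)"
    using f_nonneg F_nonneg super markov_op_nonneg[of F x]
    by (simp add: killed_step_ennreal ennreal_leI flip: ennreal_plus)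
qed

lemma green_op_finite_eq:
  assumes finite: "\<And>y. y \<in> \<Omega> \<Longrightarrow> green_op mu \<Omega> (\<lambda>y. ennreal (f y)) y < \<infinity>"
    and f_nonneg: "\<And>y. y \<in> \<Omega> \<Longrightarrow> 0 \<le> f y" and "x \<in> \<Omega>"
  defines "w \<equiv> \<lambda>y. enn2real (green_op mu \<Omega> (\<lambda>y. ennreal (f y)) y)"
  shows "w x = f x + markov_op mu w x"
proof -
  have "green_op mu \<Omega> (\<lambda>y. ennreal (f y)) y = ennreal (w y)" for y
    using finite[of y] by (cases "y \<in> \<Omega>") (simp_all add: w_def green_op_outside)
  then have G: "green_op mu \<Omega> (\<lambda>y. ennreal (f y)) = (\<lambda>y. ennreal (w y))"
    by blast
  have w_nonneg: "0 \<le> w y" for y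
    by (simp add: w_def)
  have "ennreal (w x) = ennreal (f x) + Q (\<lambda>y. ennreal (w y)) x"
    using green_op_eq[OF \<open>x \<in> \<Omega>\<close>, of "\<lambda>y. ennreal (f y)"] unfolding G .
  also have "\<dots> = ennreal (f x + markov_op mu w x)"
    using w_nonneg f_nonneg[OF \<open>x \<in> \<Omega>\<close>] markov_op_nonneg[of w x] \<open>x \<in> \<Omega>\<close>
    by (simp add: killed_step_ennreal ennreal_plus)
  finally show ?thesis
    using w_nonneg f_nonneg[OF \<open>x \<in> \<Omega>\<close>] markov_op_nonneg[of w x]
    by (subst (asm) ennreal_inj) auto
qed

lemma unit_charge_nonneg: "0 \<le> unit_charge mu p y"
  using vmeasure_pos[of p] by (simp add: unit_charge_def)

lemma green_superharmonic:
  assumes "p \<in> \<Omega>" and finite: "\<And>y. y \<in> \<Omega> \<Longrightarrow> green mu \<Omega> p y < \<infinity>" and "x \<in> \<Omega>"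
  shows "markov_op mu (\<lambda>y. enn2real (green mu \<Omega> p y)) x \<le> enn2real (green mu \<Omega> p x)"
proof -
  have "green_op mu \<Omega> (\<lambda>y. ennreal (unit_charge mu p y)) = green mu \<Omega> p"
    using \<open>p \<in> \<Omega>\<close> by (simp add: fun_eq_iff green_op_unit_charge)
  from green_op_finite_eq[of "unit_charge mu p" x, unfolded this]
  have "enn2real (green mu \<Omega> p x) = unit_charge mu p x + markov_op mu (\<lambda>y. enn2real (green mu \<Omega> p y)) x"
    using finite \<open>x \<in> \<Omega>\<close> unit_charge_nonneg by blast
  then show ?thesis
    using unit_charge_nonneg[of p x] by linarith
qed

text \<open>Averaging the tangent-line bound of the perspective \<open>h \<phi>(u/h)\<close> at \<open>(h(x), u(x))\<close> over
  the neighbours of \<open>x\<close> turns the supersolution inequalities for \<open>h\<close> and \<open>u\<close> into one for \<open>H\<close>.\<close>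
lemma perspective_supersolution:
  fixes h u :: "'a \<Rightarrow> real"
  assumes q: "1 < q" and a: "0 < a"
    and h_pos: "\<And>x. x \<in> \<Omega> \<Longrightarrow> 0 < h x" and h_nonneg: "\<And>x. 0 \<le> h x"
    and h_super: "\<And>x. x \<in> \<Omega> \<Longrightarrow> markov_op mu h x \<le> h x"
    and u_nonneg: "\<And>x. 0 \<le> u x"
    and u_super: "\<And>x. x \<in> \<Omega> \<Longrightarrow> markov_op mu u x + \<sigma> x * u x powr q \<le> u x"
    and u_ge: "\<And>x. x \<in> \<Omega> \<Longrightarrow> a * h x \<le> u x"
    and x: "x \<in> \<Omega>"
  defines "H \<equiv> \<lambda>z. if z \<in> \<Omega> then h z * powr_profile q a (u z / h z) else 0"
  shows "\<sigma> x * h x powr q + markov_op mu H x \<le> H x"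
proof -
  have u_pos: "0 < u z" if "z \<in> \<Omega>" for z
    using mult_pos_pos[OF a h_pos[OF that]] u_ge[OF that] by linarith
  define v where "v = u x / h x"
  define d where "d = v powr (- q)"
  let ?\<phi> = "powr_profile q a v"
  have v: "a \<le> v"
    using u_ge[OF x] h_pos[OF x] by (simp add: v_def pos_le_divide_eq)
  then have v_pos: "0 < v"
    using a by linarith
  have "d * v = v powr (1 - q)"
    using v_pos by (simp add: d_def powr_mult_base mult.commute flip: powr_add)
  then have slope: "0 \<le> ?\<phi> - d * v"
    using powr_profile_ge[OF q a v] by simp
  have tangent: "H z \<le> h z * ?\<phi> + d * (u z - v * h z)" for z
  proof (cases "z \<in> \<Omega>")
    case True
    then show ?thesis
      using powr_profile_perspective_le_tangent[OF q h_pos[OF True] u_pos[OF True] v_pos]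
      by (simp add: H_def d_def)
  next
    case False
    have "0 \<le> h z * (?\<phi> - d * v) + d * u z"
      using slope h_nonneg[of z] u_nonneg[of z] by (simp add: d_def)
    then show ?thesis
      using False by (simp add: H_def algebra_simps)
  qed
  have "markov_op mu H x \<le> markov_op mu (\<lambda>z. h z * ?\<phi> + d * (u z - v * h z)) x"
    unfolding markov_op_def by (intro sum_mono mult_left_mono tangent trans_prob_nonneg)
  also have "\<dots> = (?\<phi> - d * v) * markov_op mu h x + d * markov_op mu u x"
    by (simp add: markov_op_def sum_distrib_left sum.distrib sum_subtractf algebra_simps)
  also have "\<dots> \<le> (?\<phi> - d * v) * h x + d * (u x - \<sigma> x * u x powr q)"
    using slope h_super[OF x] u_super[OF x] by (intro add_mono mult_left_mono) (auto simp: d_def)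
  also have "\<dots> = h x * ?\<phi> - \<sigma> x * (d * u x powr q) + d * (u x - v * h x)"
    by (simp add: algebra_simps)
  also have "d * (u x - v * h x) = 0"
    using h_pos[OF x] by (simp add: v_def)
  also have "d * u x powr q = h x powr q"
    using h_pos[OF x] u_pos[OF x]
    by (simp add: d_def v_def powr_divide powr_minus divide_simps)
  finally show ?thesis
    using x by (simp add: H_def v_def)
qed

lemma supersolution_imp_integral_solution:
  assumes u_pos: "\<forall>x\<in>\<Omega>. 0 < u x" and u_out: "\<forall>x. x \<notin> \<Omega> \<longrightarrow> u x = 0"
    and u_super: "\<forall>x\<in>\<Omega>. - laplacian mu u x \<ge> \<sigma> x * u x powr q"
    and \<sigma>_nonneg: "\<forall>x\<in>\<Omega>. 0 \<le> \<sigma> x"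
  shows "\<forall>x\<in>\<Omega>. ennreal (u x) \<ge> green_op mu \<Omega> (\<lambda>y. ennreal (\<sigma> y * u y powr q)) x"
proof
  fix x
  assume "x \<in> \<Omega>"
  show "green_op mu \<Omega> (\<lambda>y. ennreal (\<sigma> y * u y powr q)) x \<le> ennreal (u x)"
  proof (rule green_op_le_supersolution[OF _ _ _ \<open>x \<in> \<Omega>\<close>])
    show "0 \<le> u y" for y
      using u_pos u_out by (cases "y \<in> \<Omega>") (auto simp: less_imp_le)
    show "0 \<le> \<sigma> y * u y powr q" if "y \<in> \<Omega>" for y
      using \<sigma>_nonneg that by simp
    show "\<sigma> y * u y powr q + markov_op mu u y \<le> u y" if "y \<in> \<Omega>" for y
    proof -
      have "\<sigma> y * u y powr q \<le> u y - markov_op mu u y"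
        using u_super that by (simp add: laplacian_eq_markov_op)
      then show ?thesis
        by simp
    qed
  qed
qed

lemma integral_solution_imp_supersolution:
  assumes conn: "connected_subset mu \<Omega>"
    and solution: "\<exists>u. (\<forall>x\<in>\<Omega>. 0 < u x) \<and>
      (\<forall>x\<in>\<Omega>. ennreal (u x) \<ge> green_op mu \<Omega> (\<lambda>y. ennreal (\<sigma> y * u y powr q)) x)"
    and \<sigma>_nonneg: "\<forall>x\<in>\<Omega>. 0 \<le> \<sigma> x" and p: "p \<in> \<Omega>" "0 < \<sigma> p" and q: "0 \<le> q"
  shows "\<exists>w. (\<forall>x\<in>\<Omega>. 0 < w x) \<and> (\<forall>x. x \<notin> \<Omega> \<longrightarrow> w x = 0) \<and>
    (\<forall>x\<in>\<Omega>. - laplacian mu w x \<ge> \<sigma> x * w x powr q)"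
proof -
  obtain u where u_pos: "\<forall>x\<in>\<Omega>. 0 < u x"
    and u_int: "\<forall>x\<in>\<Omega>. ennreal (u x) \<ge> green_op mu \<Omega> (\<lambda>y. ennreal (\<sigma> y * u y powr q)) x"
    using solution by blast
  let ?f = "\<lambda>y. \<sigma> y * u y powr q"
  let ?G = "green_op mu \<Omega> (\<lambda>y. ennreal (?f y))"
  define w where "w = (\<lambda>y. enn2real (?G y))"
  have finite: "?G y < \<infinity>" if "y \<in> \<Omega>" for y
    using u_int that ennreal_less_top[of "u y"] by (auto intro: le_less_trans)
  have w_le: "w x \<le> u x" if "x \<in> \<Omega>" for x
  proof -
    have "enn2real (?G x) \<le> enn2real (ennreal (u x))"
      using u_int that by (intro enn2real_mono) auto
    then show ?thesis
      using less_imp_le[OF bspec[OF u_pos that]] by (simp add: w_def)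
  qed
  have w_pos: "0 < w x" if "x \<in> \<Omega>" for x
  proof -
    have "0 < ?G x"
      using green_op_pos[OF conn p(1) _ that] p bspec[OF u_pos p(1)] by simp
    then show ?thesis
      using finite[OF that] by (simp add: w_def enn2real_positive_iff)
  qed
  have w_super: "\<sigma> x * w x powr q \<le> - laplacian mu w x" if x: "x \<in> \<Omega>" for x
  proof -
    have "\<sigma> x * w x powr q \<le> ?f x"
      using \<sigma>_nonneg x w_le[OF x] w_pos[OF x] q by (intro mult_left_mono powr_mono2) auto
    also have "\<dots> = - laplacian mu w x"
      using green_op_finite_eq[of ?f x] finite x \<sigma>_nonneg
      by (simp add: laplacian_eq_markov_op w_def)
    finally show ?thesis .
  qed
  have "w x = 0" if "x \<notin> \<Omega>" for x
    using that by (simp add: w_def green_op_outside)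
  with w_pos w_super show ?thesis
    by blast
qed

lemma supersolution_ge_green:
  assumes u_pos: "\<forall>x\<in>\<Omega>. 0 < u x" and u_out: "\<forall>x. x \<notin> \<Omega> \<longrightarrow> u x = 0"
    and u_super: "\<forall>x\<in>\<Omega>. - laplacian mu u x \<ge> \<sigma> x * u x powr q"
    and \<sigma>_nonneg: "\<forall>x\<in>\<Omega>. 0 \<le> \<sigma> x" and "p \<in> \<Omega>"
  shows "ennreal (\<sigma> p * u p powr q * vmeasure mu p) * green mu \<Omega> p x \<le> ennreal (u x)"
proof (cases "x \<in> \<Omega>")
  case True
  have "ennreal (\<sigma> p * u p powr q * vmeasure mu p) * green mu \<Omega> p x
      \<le> green_op mu \<Omega> (\<lambda>y. ennreal (\<sigma> y * u y powr q)) x"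
    using green_op_ge_green[OF \<open>p \<in> \<Omega>\<close>, of "\<lambda>y. ennreal (\<sigma> y * u y powr q)"]
      \<sigma>_nonneg \<open>p \<in> \<Omega>\<close> vmeasure_pos[of p]
    by (simp add: ennreal_mult)
  also have "\<dots> \<le> ennreal (u x)"
    using supersolution_imp_integral_solution[OF assms(1-4)] True by blast
  finally show ?thesis .
qed (simp add: green_outside)

lemma green_op_green_powr_le:
  assumes q: "1 < q" and a: "0 < a" and conn: "connected_subset mu \<Omega>" and p: "p \<in> \<Omega>"
    and green_finite: "\<And>x. green mu \<Omega> p x < \<infinity>"
    and u_nonneg: "\<And>x. 0 \<le> u x"
    and u_super: "\<And>x. x \<in> \<Omega> \<Longrightarrow> markov_op mu u x + \<sigma> x * u x powr q \<le> u x"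
    and u_ge: "\<And>x. x \<in> \<Omega> \<Longrightarrow> ennreal a * green mu \<Omega> p x \<le> ennreal (u x)"
    and \<sigma>_nonneg: "\<And>x. x \<in> \<Omega> \<Longrightarrow> 0 \<le> \<sigma> x" and x: "x \<in> \<Omega>"
  shows "green_op mu \<Omega> (\<lambda>y. ennreal (\<sigma> y) * epowr (green mu \<Omega> p y) q) x
    \<le> ennreal (a powr (1 - q) * q / (q - 1)) * green mu \<Omega> p x"
proof -
  define h where "h = (\<lambda>x. enn2real (green mu \<Omega> p x))"
  define K where "K = a powr (1 - q) * q / (q - 1)"
  define H where "H = (\<lambda>z. if z \<in> \<Omega> then h z * powr_profile q a (u z / h z) else 0)"
  have green_h: "green mu \<Omega> p x = ennreal (h x)" for x
    using green_finite[of x] by (simp add: h_def)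
  have h_nonneg: "0 \<le> h x" for x
    by (simp add: h_def)
  have h_pos: "0 < h x" if "x \<in> \<Omega>" for x
    using green_pos[OF conn p that] green_h[of x] by simp
  have u_ge_h: "a \<le> u x / h x" if "x \<in> \<Omega>" for x
    using u_ge[OF that] a h_pos[OF that] u_nonneg[of x]
    by (simp add: green_h pos_le_divide_eq flip: ennreal_mult)
  have H_nonneg: "0 \<le> H z" for z
    using powr_profile_nonneg[OF q a u_ge_h, of z] h_nonneg[of z] by (simp add: H_def)
  have "green_op mu \<Omega> (\<lambda>y. ennreal (\<sigma> y) * epowr (green mu \<Omega> p y) q) x
      = green_op mu \<Omega> (\<lambda>y. ennreal (\<sigma> y * h y powr q)) x"
    using \<sigma>_nonneg h_nonneg by (intro green_op_cong) (simp add: epowr_def green_h ennreal_mult)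
  also have "\<dots> \<le> ennreal (H x)"
  proof (rule green_op_le_supersolution[OF H_nonneg _ _ x])
    show "0 \<le> \<sigma> y * h y powr q" if "y \<in> \<Omega>" for y
      using \<sigma>_nonneg[OF that] by simp
    show "\<sigma> y * h y powr q + markov_op mu H y \<le> H y" if "y \<in> \<Omega>" for y
      unfolding H_def
    proof (rule perspective_supersolution[OF q a h_pos h_nonneg _ u_nonneg u_super _ that])
      show "markov_op mu h z \<le> h z" if "z \<in> \<Omega>" for z
        using green_superharmonic[OF p _ that] green_finite by (simp add: h_def)
      show "a * h z \<le> u z" if "z \<in> \<Omega>" for z
        using u_ge_h[OF that] h_pos[OF that] by (simp add: pos_le_divide_eq)
    qed
  qed
  also have "\<dots> \<le> ennreal (K * h x)"
    using mult_left_mono[OF powr_profile_le[OF q] h_nonneg[of x]] x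
    by (intro ennreal_leI) (simp add: H_def K_def mult.commute)
  also have "\<dots> = ennreal K * green mu \<Omega> p x"
    using a q h_nonneg[of x] by (simp add: green_h ennreal_mult K_def del: times_divide_eq_left)
  finally show ?thesis
    by (simp add: K_def)
qed

lemma supersolution_imp_green_bound:
  assumes conn: "connected_subset mu \<Omega>"
    and supersolution: "\<exists>u. (\<forall>x\<in>\<Omega>. 0 < u x) \<and> (\<forall>x. x \<notin> \<Omega> \<longrightarrow> u x = 0) \<and>
      (\<forall>x\<in>\<Omega>. - laplacian mu u x \<ge> \<sigma> x * u x powr q)"
    and \<sigma>_nonneg: "\<forall>x\<in>\<Omega>. 0 \<le> \<sigma> x" and p: "p \<in> \<Omega>" "0 < \<sigma> p" and q: "1 < q"
  shows "\<exists>C::real. 0 < C \<and> (\<forall>x\<in>\<Omega>.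
    green_op mu \<Omega> (\<lambda>y. ennreal (\<sigma> y) * epowr (green mu \<Omega> p y) q) x
      \<le> ennreal C * green mu \<Omega> p x \<and> green mu \<Omega> p x < \<infinity>)"
proof -
  obtain u where u_pos: "\<forall>x\<in>\<Omega>. 0 < u x" and u_out: "\<forall>x. x \<notin> \<Omega> \<longrightarrow> u x = 0"
    and u_super: "\<forall>x\<in>\<Omega>. - laplacian mu u x \<ge> \<sigma> x * u x powr q"
    using supersolution by blast
  define a where "a = \<sigma> p * u p powr q * vmeasure mu p"
  have a: "0 < a"
    using p bspec[OF u_pos p(1)] vmeasure_pos[of p] by (simp add: a_def)
  have u_ge: "ennreal a * green mu \<Omega> p x \<le> ennreal (u x)" for x
    unfolding a_def by (rule supersolution_ge_green[OF u_pos u_out u_super \<sigma>_nonneg p(1)])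
  have green_finite: "green mu \<Omega> p x < \<infinity>" for x
  proof -
    have "ennreal a * green mu \<Omega> p x < \<infinity>"
      using u_ge[of x] ennreal_less_top[of "u x"] by (auto intro: le_less_trans)
    then show ?thesis
      using a by (auto simp: ennreal_mult_less_top)
  qed
  have u_nonneg: "0 \<le> u x" for x
    using u_pos u_out by (cases "x \<in> \<Omega>") (auto simp: less_imp_le)
  have "green_op mu \<Omega> (\<lambda>y. ennreal (\<sigma> y) * epowr (green mu \<Omega> p y) q) x
      \<le> ennreal (a powr (1 - q) * q / (q - 1)) * green mu \<Omega> p x" if "x \<in> \<Omega>" for x
  proof (rule green_op_green_powr_le[OF q a conn p(1) green_finite u_nonneg _ u_ge _ that])
    show "markov_op mu u y + \<sigma> y * u y powr q \<le> u y" if "y \<in> \<Omega>" for y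
      using bspec[OF u_super that] by (simp add: laplacian_eq_markov_op)
  qed (use \<sigma>_nonneg in blast)
  moreover have "0 < a powr (1 - q) * q / (q - 1)"
    using a q by simp
  ultimately show ?thesis
    using green_finite by blast
qed

lemma green_bound_imp_integral_solution:
  assumes conn: "connected_subset mu \<Omega>" and \<sigma>_nonneg: "\<forall>x\<in>\<Omega>. 0 \<le> \<sigma> x" and q: "1 < q"
    and bound: "\<exists>p\<in>\<Omega>. 0 < \<sigma> p \<and> (\<exists>C::real. 0 < C \<and> (\<forall>x\<in>\<Omega>.
      green_op mu \<Omega> (\<lambda>y. ennreal (\<sigma> y) * epowr (green mu \<Omega> p y) q) x
        \<le> ennreal C * green mu \<Omega> p x \<and> green mu \<Omega> p x < \<infinity>))"
  shows "\<exists>u. (\<forall>x\<in>\<Omega>. 0 < u x) \<and>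
    (\<forall>x\<in>\<Omega>. ennreal (u x) \<ge> green_op mu \<Omega> (\<lambda>y. ennreal (\<sigma> y * u y powr q)) x)"
proof -
  obtain p C where p: "p \<in> \<Omega>" and C: "0 < C" and bound: "\<forall>x\<in>\<Omega>.
      green_op mu \<Omega> (\<lambda>y. ennreal (\<sigma> y) * epowr (green mu \<Omega> p y) q) x
        \<le> ennreal C * green mu \<Omega> p x \<and> green mu \<Omega> p x < \<infinity>"
    using bound by blast
  define h where "h = (\<lambda>x. enn2real (green mu \<Omega> p x))"
  text \<open>The scaling with \<open>l\<^sup>q\<^sup>-\<^sup>1 C = 1\<close> makes \<open>l g\<^sub>\<Omega>(p,\<cdot>)\<close> a solution.\<close>
  define l where "l = C powr (- 1 / (q - 1))"
  have green_h: "green mu \<Omega> p x = ennreal (h x)" if "x \<in> \<Omega>" for x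
    using bound that by (simp add: h_def)
  have h_pos: "0 < h x" if "x \<in> \<Omega>" for x
    using green_pos[OF conn p that] green_h[OF that] by simp
  have l: "0 < l"
    using C by (simp add: l_def)
  have l_fixpoint: "l powr q * C = l"
    using powr_fixpoint[OF C q] by (simp add: l_def)
  have "green_op mu \<Omega> (\<lambda>y. ennreal (\<sigma> y * (l * h y) powr q)) x \<le> ennreal (l * h x)"
    if x: "x \<in> \<Omega>" for x
  proof -
    have "green_op mu \<Omega> (\<lambda>y. ennreal (\<sigma> y * (l * h y) powr q)) x
        = green_op mu \<Omega> (\<lambda>y. ennreal (l powr q) * (ennreal (\<sigma> y) * epowr (green mu \<Omega> p y) q)) x"
      using \<sigma>_nonneg l h_pos green_h
      by (intro green_op_cong) (simp add: epowr_def powr_mult ennreal_mult mult_ac less_imp_le)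
    also have "\<dots> \<le> ennreal (l powr q) * (ennreal C * green mu \<Omega> p x)"
      using bound x by (simp add: green_op_cmult mult_left_mono)
    also have "\<dots> = ennreal (l * h x)"
      using C x h_pos[OF x] l_fixpoint
      by (simp add: green_h flip: ennreal_mult mult.assoc)
    finally show ?thesis .
  qed
  then show ?thesis
    using l h_pos by (intro exI[of _ "\<lambda>x. l * h x"]) simp
qed

end

lemma vmeasure_pos_if_connected:
  fixes mu :: "'a \<Rightarrow> 'a \<Rightarrow> real"
  assumes "infinite (UNIV :: 'a set)" and "weighted_graph mu"
    and "locally_finite mu" and "graph_connected mu"
  shows "0 < vmeasure mu x"
proof -
  obtain y where "y \<noteq> x"
    using ex_new_if_finite[OF assms(1), of "{x}"] by auto
  have "(x, y) \<in> {(a, b). 0 < mu a b}\<^sup>*"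
    using assms(4) by (simp add: graph_connected_def)
  then obtain z where z: "0 < mu x z"
    using \<open>y \<noteq> x\<close> by (cases rule: converse_rtranclE) auto
  also have "\<dots> \<le> (\<Sum>w\<in>nbrs mu x. mu x w)"
    using assms(2,3) z
    by (intro member_le_sum) (auto simp: locally_finite_def nbrs_def weighted_graph_def)
  finally show ?thesis
    by (simp add: vmeasure_def)
qed

theorem theorem1p1:
  fixes mu :: "'a::countable \<Rightarrow> 'a \<Rightarrow> real"
    and \<Omega> :: "'a set" and \<sigma> :: "'a \<Rightarrow> real" and q :: real
  assumes inf: "infinite (UNIV :: 'a set)"
    and wg: "weighted_graph mu"
    and lf: "locally_finite mu"
    and conn: "graph_connected mu"
    and conn\<Omega>: "connected_subset mu \<Omega>"
    and np: "\<Omega> \<noteq> UNIV \<or> \<not> parabolic mu"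
    and \<sigma>_nonneg: "\<forall>x\<in>\<Omega>. 0 \<le> \<sigma> x"
    and \<sigma>_nonzero: "\<exists>x\<in>\<Omega>. \<sigma> x \<noteq> 0"
    and q: "1 < q"
  shows
    "((\<exists>u::'a \<Rightarrow> real. (\<forall>x\<in>\<Omega>. 0 < u x) \<and> (\<forall>x. x \<notin> \<Omega> \<longrightarrow> u x = 0) \<and>
         (\<forall>x\<in>\<Omega>. - laplacian mu u x \<ge> \<sigma> x * u x powr q))
      \<longleftrightarrow>
      (\<exists>u::'a \<Rightarrow> real. (\<forall>x\<in>\<Omega>. 0 < u x) \<and>
         (\<forall>x\<in>\<Omega>. ennreal (u x) \<ge> green_op mu \<Omega> (\<lambda>y. ennreal (\<sigma> y * u y powr q)) x)))
   \<and> ((\<exists>u::'a \<Rightarrow> real. (\<forall>x\<in>\<Omega>. 0 < u x) \<and>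
         (\<forall>x\<in>\<Omega>. ennreal (u x) \<ge> green_op mu \<Omega> (\<lambda>y. ennreal (\<sigma> y * u y powr q)) x))
      \<longleftrightarrow>
      (\<exists>x0\<in>\<Omega>. 0 < \<sigma> x0 \<and> (\<exists>C::real. 0 < C \<and> (\<forall>x\<in>\<Omega>.
         green_op mu \<Omega> (\<lambda>y. ennreal (\<sigma> y) * epowr (green mu \<Omega> x0 y) q) x
           \<le> ennreal C * green mu \<Omega> x0 x \<and> green mu \<Omega> x0 x < \<infinity>))))
   \<and> ((\<exists>x0\<in>\<Omega>. 0 < \<sigma> x0 \<and> (\<exists>C::real. 0 < C \<and> (\<forall>x\<in>\<Omega>.
         green_op mu \<Omega> (\<lambda>y. ennreal (\<sigma> y) * epowr (green mu \<Omega> x0 y) q) x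
           \<le> ennreal C * green mu \<Omega> x0 x \<and> green mu \<Omega> x0 x < \<infinity>)))
      \<longleftrightarrow>
      (\<forall>x0\<in>\<Omega>. 0 < \<sigma> x0 \<longrightarrow> (\<exists>C::real. 0 < C \<and> (\<forall>x\<in>\<Omega>.
         green_op mu \<Omega> (\<lambda>y. ennreal (\<sigma> y) * epowr (green mu \<Omega> x0 y) q) x
           \<le> ennreal C * green mu \<Omega> x0 x \<and> green mu \<Omega> x0 x < \<infinity>))))"
proof -
  interpret killed_walk mu \<Omega>
    using wg lf vmeasure_pos_if_connected[OF inf wg lf conn] by unfold_locales
  obtain p where p: "p \<in> \<Omega>" "0 < \<sigma> p"
    using \<sigma>_nonzero \<sigma>_nonneg by (metis less_eq_real_def)
  have q_nonneg: "0 \<le> q"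
    using q by simp
  note I_II = supersolution_imp_integral_solution[OF _ _ _ \<sigma>_nonneg]
  note II_I = integral_solution_imp_supersolution[OF conn\<Omega> _ \<sigma>_nonneg p q_nonneg]
  note I_III = supersolution_imp_green_bound[OF conn\<Omega> _ \<sigma>_nonneg _ _ q]
  note III_II = green_bound_imp_integral_solution[OF conn\<Omega> \<sigma>_nonneg q]
  show ?thesis
  proof (intro conjI iffI, goal_cases)
    case 1
    then show ?case using I_II by blast
  next
    case 2
    then show ?case by (rule II_I)
  next
    case 3
    then show ?case using I_III[OF II_I[OF 3]] p by blast
  next
    case 4
    then show ?case by (rule III_II)
  next
    case 5
    then show ?case using I_III[OF II_I[OF III_II[OF 5]]] by blast
  next
    case 6
    then show ?case using p by blast
  qed
qed

end
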